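(* There exists $k^*\in\{1,\dots,n\}$ such that $\{1,\dots,k^*\}$ maximizes $\widehat{sw}(S)$ over all nonempty $S\subseteq\mathbb{S}$; such a $k^*$ can be found by evaluating $\widehat{sw}(\{1,\dots,k\})$ for $k=1,\dots,n$ and taking the best, i.e. in time linear in $n$. (In general $k^*<n$ is possible.)
   Context: Sellers $\mathbb{S}=\{1,\dots,n\}$ with product qualities $\theta_1\ge\dots\ge\theta_n\ge0$. $W$ is the Lambert W function on $[0,\infty)$ ($W(x)e^{W(x)}=x$), $w_i=W(e^{\theta_i-1})$. For nonempty $S$, the Cournot-equilibrium social welfare is $\widehat{sw}(S)=\log(1+\sum_{i\in S}w_i)+\frac{\sum_{i\in S}(w_i^2+w_i)}{1+\sum_{i\in S}w_i}$. *)

theory Defs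
  imports Complex_Main
begin

definition lambertW :: "real \<Rightarrow> real" where
  "lambertW x = (THE w. w \<ge> 0 \<and> w * exp w = x)"

definition wq :: "(nat \<Rightarrow> real) \<Rightarrow> nat \<Rightarrow> real" where
  "wq \<theta> i = lambertW (exp (\<theta> i - 1))"

text \<open>Cournot-equilibrium social welfare of a nonempty seller set S.\<close>
definition sw_hat :: "(nat \<Rightarrow> real) \<Rightarrow> nat set \<Rightarrow> real" where
  "sw_hat \<theta> S =
     ln (1 + (\<Sum>i\<in>S. wq \<theta> i))
     + (\<Sum>i\<in>S. (wq \<theta> i)^2 + wq \<theta> i) / (1 + (\<Sum>i\<in>S. wq \<theta> i))"

end

theory Submission imports Defs begin

text \<open>Removing a seller j from an optimal set S and adding instead a better seller i < j keeps
  the aggregates a = \<Sum>w and b = \<Sum>(w^2 + w) of the other sellers fixed, so the welfare is a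
  one-variable function of the weight of the added seller. Its derivative has the sign of an
  increasing polynomial, hence it is quasiconvex on [0,\<infinity>): the welfare of S is at most that of
  dropping j or of replacing j by i. A maximiser with the smallest index sum therefore contains,
  with every seller, all better ones, i.e. it is a prefix {1..k}.\<close>

lemma mult_exp_strict_mono:
  fixes u v :: real
  assumes "0 \<le> u" "u < v"
  shows "u * exp u < v * exp v"
proof -
  have "u * exp u \<le> u * exp v" using assms by (simp add: mult_left_mono)
  also have "\<dots> < v * exp v" using assms by simp
  finally show ?thesis .
qed

lemma lambertW_eqI:
  assumes "0 \<le> w" "w * exp w = x"
  shows "lambertW x = w"
  unfolding lambertW_def
proof (rule the_equality)
  fix v assume v: "0 \<le> v \<and> v * exp v = x"
  show "v = w"
    using mult_exp_strict_mono[of v w] mult_exp_strict_mono[of w v] v assms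
    by (cases v w rule: linorder_cases) auto
qed (use assms in auto)

lemma lambertW:
  assumes "0 \<le> x"
  shows "0 \<le> lambertW x" and "lambertW x * exp (lambertW x) = x"
proof -
  have "x \<le> x * exp x" using assms by (simp add: mult_le_cancel_left1)
  moreover have "\<forall>t. 0 \<le> t \<and> t \<le> x \<longrightarrow> isCont (\<lambda>t. t * exp t) t"
    by (auto intro!: continuous_intros)
  ultimately obtain w where "0 \<le> w" "w \<le> x" "w * exp w = x"
    using IVT[of "\<lambda>t. t * exp t" 0 x x] assms by auto
  then show "0 \<le> lambertW x" "lambertW x * exp (lambertW x) = x"
    using lambertW_eqI by auto
qed

lemma lambertW_mono:
  assumes "0 \<le> x" "x \<le> y"
  shows "lambertW x \<le> lambertW y"
proof (rule ccontr)
  assume "\<not> ?thesis"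
  then have "lambertW y * exp (lambertW y) < lambertW x * exp (lambertW x)"
    using assms by (intro mult_exp_strict_mono) (auto simp: lambertW)
  then show False using assms by (simp add: lambertW)
qed

lemma wq_nonneg: "0 \<le> wq \<theta> i"
  unfolding wq_def by (simp add: lambertW)

lemma wq_mono: "\<theta> j \<le> \<theta> i \<Longrightarrow> wq \<theta> j \<le> wq \<theta> i"
  unfolding wq_def by (simp add: lambertW_mono)

lemma le_max_if_deriv_sign_mono:
  fixes f f' :: "real \<Rightarrow> real"
  assumes "a \<le> y" "y \<le> b"
    and deriv: "\<And>t. a \<le> t \<Longrightarrow> t \<le> b \<Longrightarrow> (f has_real_derivative f' t) (at t)"
    and sign: "\<And>s t. a \<le> s \<Longrightarrow> s \<le> t \<Longrightarrow> t \<le> b \<Longrightarrow> 0 \<le> f' s \<Longrightarrow> 0 \<le> f' t"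
  shows "f y \<le> max (f a) (f b)"
proof -
  have cont: "continuous_on {u..v} f" if "a \<le> u" "v \<le> b" for u v
    using that by (intro continuous_at_imp_continuous_on ballI DERIV_isCont[OF deriv]) auto
  show ?thesis
  proof (cases "0 \<le> f' y")
    case True
    have "f y \<le> f b"
    proof (rule DERIV_nonneg_imp_increasing_open[OF \<open>y \<le> b\<close> _ cont])
      fix t assume "y < t" "t < b"
      then show "\<exists>z. (f has_real_derivative z) (at t) \<and> 0 \<le> z"
        using deriv[of t] sign[of y t] True assms(1) by auto
    qed (use assms(1) in simp_all)
    then show ?thesis by simp
  next
    case False
    have "f y \<le> f a"
    proof (rule DERIV_nonpos_imp_decreasing_open[OF \<open>a \<le> y\<close> _ cont])
      fix t assume "a < t" "t < y"
      then have "f' t \<le> 0" using sign[of t y] False assms(2) by fastforce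
      then show "\<exists>z. (f has_real_derivative z) (at t) \<and> z \<le> 0"
        using deriv[of t] \<open>a < t\<close> \<open>t < y\<close> assms(2) by auto
    qed (use assms(2) in simp_all)
    then show ?thesis by simp
  qed
qed

text \<open>Welfare of a seller set with aggregates a = \<Sum>w and b = \<Sum>(w^2 + w), after adding
  one seller of weight x.\<close>
definition sw_extend :: "real \<Rightarrow> real \<Rightarrow> real \<Rightarrow> real" where
  "sw_extend a b x = ln (1 + a + x) + (b + x\<^sup>2 + x) / (1 + a + x)"

lemma sw_extend_deriv:
  assumes "0 \<le> a" "0 \<le> t"
  shows "(sw_extend a b has_real_derivative
           (2 + 2*a - b + 3*t + 2*a*t + t\<^sup>2) / (1 + a + t)\<^sup>2) (at t)"
proof -
  have pos: "0 < 1 + a + t" using assms by simp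
  have "(sw_extend a b has_real_derivative
          1 / (1 + a + t) + ((2*t + 1) * (1 + a + t) - (b + t\<^sup>2 + t)) / (1 + a + t)\<^sup>2) (at t)"
    unfolding sw_extend_def[abs_def] using pos
    by (auto intro!: derivative_eq_intros simp: power2_eq_square)
  moreover have "1 / d + X / d\<^sup>2 = (d + X) / d\<^sup>2" if "0 < d" for d X :: real
    using that by (simp add: field_simps power2_eq_square)
  moreover have "(1 + a + t) + ((2*t + 1) * (1 + a + t) - (b + t\<^sup>2 + t))
      = 2 + 2*a - b + 3*t + 2*a*t + t\<^sup>2"
    by (simp add: algebra_simps power2_eq_square)
  ultimately show ?thesis using pos by metis
qed

lemma sw_extend_le_max:
  assumes "0 \<le> a" "0 \<le> y" "y \<le> x"
  shows "sw_extend a b y \<le> max (sw_extend a b 0) (sw_extend a b x)"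
proof (rule le_max_if_deriv_sign_mono[OF assms(2,3) sw_extend_deriv[OF assms(1)]])
  fix s t :: real
  assume st: "0 \<le> s" "s \<le> t"
  assume "0 \<le> (2 + 2*a - b + 3*s + 2*a*s + s\<^sup>2) / (1 + a + s)\<^sup>2"
  then have "0 \<le> 2 + 2*a - b + 3*s + 2*a*s + s\<^sup>2"
    using assms(1) st by (simp add: zero_le_divide_iff)
  moreover have "s\<^sup>2 \<le> t\<^sup>2" using st by (intro power_mono)
  moreover have "a * s \<le> a * t" using st assms(1) by (intro mult_left_mono)
  ultimately have "0 \<le> 2 + 2*a - b + 3*t + 2*a*t + t\<^sup>2" using st by linarith
  then show "0 \<le> (2 + 2*a - b + 3*t + 2*a*t + t\<^sup>2) / (1 + a + t)\<^sup>2"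
    by simp
qed

lemma sw_hat_insert:
  assumes "finite T" "j \<notin> T"
  shows "sw_hat \<theta> (insert j T)
    = sw_extend (\<Sum>i\<in>T. wq \<theta> i) (\<Sum>i\<in>T. (wq \<theta> i)\<^sup>2 + wq \<theta> i) (wq \<theta> j)"
  using assms unfolding sw_hat_def sw_extend_def by (simp add: add_ac)

lemma sw_hat_eq_sw_extend_0:
  "sw_hat \<theta> T = sw_extend (\<Sum>i\<in>T. wq \<theta> i) (\<Sum>i\<in>T. (wq \<theta> i)\<^sup>2 + wq \<theta> i) 0"
  unfolding sw_hat_def sw_extend_def by simp

lemma sw_hat_empty: "sw_hat \<theta> {} = 0"
  unfolding sw_hat_def by simp

lemma sw_hat_nonneg: "0 \<le> sw_hat \<theta> S"
  unfolding sw_hat_def by (intro add_nonneg_nonneg divide_nonneg_nonneg) (auto simp: wq_nonneg sum_nonneg)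

lemma sw_hat_exchange:
  assumes "finite S" "j \<in> S" "i \<notin> S" "\<theta> j \<le> \<theta> i"
  shows "sw_hat \<theta> S \<le> max (sw_hat \<theta> (S - {j})) (sw_hat \<theta> (insert i (S - {j})))"
proof -
  let ?T = "S - {j}"
  have "S = insert j ?T" using assms by auto
  then have "sw_hat \<theta> S = sw_extend (\<Sum>i\<in>?T. wq \<theta> i) (\<Sum>i\<in>?T. (wq \<theta> i)\<^sup>2 + wq \<theta> i) (wq \<theta> j)"
    using sw_hat_insert[of ?T j \<theta>] assms(1) by simp
  moreover have "sw_hat \<theta> (insert i ?T)
      = sw_extend (\<Sum>i\<in>?T. wq \<theta> i) (\<Sum>i\<in>?T. (wq \<theta> i)\<^sup>2 + wq \<theta> i) (wq \<theta> i)"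
    using sw_hat_insert[of ?T i \<theta>] assms(1,3) by simp
  ultimately show ?thesis
    using sw_extend_le_max[OF sum_nonneg[OF wq_nonneg] wq_nonneg wq_mono[OF assms(4)]]
    by (simp only: sw_hat_eq_sw_extend_0[of \<theta> ?T])
qed

lemma prefix_maximiser_exists:
  fixes f :: "nat set \<Rightarrow> real"
  assumes "1 \<le> n"
    and empty_least: "\<And>S. f {} \<le> f S"
    and exchange: "\<And>S i j. S \<subseteq> {1..n} \<Longrightarrow> j \<in> S \<Longrightarrow> 1 \<le> i \<Longrightarrow> i < j \<Longrightarrow> i \<notin> S \<Longrightarrow>
                     f S \<le> max (f (S - {j})) (f (insert i (S - {j})))"
  shows "\<exists>k\<in>{1..n}. \<forall>S. S \<noteq> {} \<and> S \<subseteq> {1..n} \<longrightarrow> f S \<le> f {1..k}"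
proof -
  define M where "M = {S. S \<noteq> {} \<and> S \<subseteq> {1..n}}"
  have "finite M" unfolding M_def by (rule finite_subset[of _ "Pow {1..n}"]) auto
  moreover have "{1} \<in> M" unfolding M_def using assms(1) by auto
  ultimately have "Max (f ` M) \<in> f ` M" by (intro Max_in) auto
  then obtain S0 where "S0 \<in> M" "f S0 = Max (f ` M)" by auto
  then have "\<forall>T\<in>M. f T \<le> f S0" using \<open>finite M\<close> by simp
  define optimal where "optimal S \<longleftrightarrow> S \<in> M \<and> (\<forall>T\<in>M. f T \<le> f S)" for S
  obtain S where opt: "optimal S" and least: "\<And>T. optimal T \<Longrightarrow> \<Sum>S \<le> \<Sum>T"
    using ex_has_least_nat[of optimal S0 "\<lambda>S. \<Sum>S"] \<open>S0 \<in> M\<close> \<open>\<forall>T\<in>M. f T \<le> f S0\<close>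
    unfolding optimal_def by blast
  have S: "S \<noteq> {}" "S \<subseteq> {1..n}" "finite S" "\<forall>T\<in>M. f T \<le> f S"
    using opt finite_subset unfolding optimal_def M_def by auto
  have closed: "i \<in> S" if "j \<in> S" "1 \<le> i" "i < j" for i j
  proof (rule ccontr)
    assume "i \<notin> S"
    let ?T = "S - {j}"
    have sum: "\<Sum>S = j + \<Sum>?T" using S(3) \<open>j \<in> S\<close> by (simp add: sum.remove)
    have "insert i ?T \<in> M" using S that unfolding M_def by auto
    moreover have "\<Sum>(insert i ?T) < \<Sum>S"
      using sum S(3) \<open>i \<notin> S\<close> \<open>i < j\<close> by simp
    ultimately have "f S > f (insert i ?T)"
      using least[of "insert i ?T"] S(4) unfolding optimal_def by (meson not_le order_trans)
    then have "f S \<le> f ?T"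
      using exchange[OF S(2) that \<open>i \<notin> S\<close>] by linarith
    moreover have "?T \<in> M"
    proof -
      have "?T \<noteq> {}"
        using \<open>f S > f (insert i ?T)\<close> \<open>f S \<le> f ?T\<close> empty_least[of "insert i ?T"] by force
      then show ?thesis using S unfolding M_def by auto
    qed
    ultimately have "optimal ?T" using S(4) unfolding optimal_def by auto
    then show False using least[of ?T] sum \<open>1 \<le> i\<close> \<open>i < j\<close> by simp
  qed
  define k where "k = Max S"
  have "k \<in> S" using S by (simp add: k_def)
  have "S \<subseteq> {1..k}" using S by (auto simp: k_def)
  moreover have "{1..k} \<subseteq> S" using closed[OF \<open>k \<in> S\<close>] \<open>k \<in> S\<close> by (auto simp: le_less)
  ultimately have "S = {1..k}" by blast
  moreover have "k \<in> {1..n}" using S \<open>k \<in> S\<close> by auto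
  ultimately show ?thesis
    using S(4) unfolding M_def by blast
qed

theorem theorem6:
  fixes \<theta> :: "nat \<Rightarrow> real" and n :: nat
  assumes n_pos: "n \<ge> 1"
    and sorted: "\<And>i j. 1 \<le> i \<Longrightarrow> i \<le> j \<Longrightarrow> j \<le> n \<Longrightarrow> \<theta> j \<le> \<theta> i"
    and nonneg: "\<theta> n \<ge> 0"
  shows "(\<exists>k\<in>{1..n}. \<forall>S. S \<noteq> {} \<and> S \<subseteq> {1..n} \<longrightarrow> sw_hat \<theta> S \<le> sw_hat \<theta> {1..k})
       \<and> (\<forall>k\<in>{1..n}. (\<forall>j\<in>{1..n}. sw_hat \<theta> {1..j} \<le> sw_hat \<theta> {1..k}) \<longrightarrow>
            (\<forall>S. S \<noteq> {} \<and> S \<subseteq> {1..n} \<longrightarrow> sw_hat \<theta> S \<le> sw_hat \<theta> {1..k}))"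
proof -
  let ?optimal = "\<lambda>k. \<forall>S. S \<noteq> {} \<and> S \<subseteq> {1..n} \<longrightarrow> sw_hat \<theta> S \<le> sw_hat \<theta> {1..k}"
  have "\<exists>k\<in>{1..n}. ?optimal k"
  proof (rule prefix_maximiser_exists[OF n_pos])
    show "sw_hat \<theta> {} \<le> sw_hat \<theta> S" for S
      by (simp add: sw_hat_empty sw_hat_nonneg)
    show "sw_hat \<theta> S \<le> max (sw_hat \<theta> (S - {j})) (sw_hat \<theta> (insert i (S - {j})))"
      if "S \<subseteq> {1..n}" "j \<in> S" "1 \<le> i" "i < j" "i \<notin> S" for S i j
    proof (rule sw_hat_exchange)
      show "finite S" using \<open>S \<subseteq> {1..n}\<close> by (rule finite_subset) simp
      show "\<theta> j \<le> \<theta> i" using that by (intro sorted) auto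
    qed (use that in auto)
  qed
  then obtain k where "k \<in> {1..n}" "?optimal k" ..
  have "?optimal k'" if "\<forall>j\<in>{1..n}. sw_hat \<theta> {1..j} \<le> sw_hat \<theta> {1..k'}" for k'
  proof (intro allI impI)
    fix S assume "S \<noteq> {} \<and> S \<subseteq> {1..n}"
    then have "sw_hat \<theta> S \<le> sw_hat \<theta> {1..k}" using \<open>?optimal k\<close> by blast
    also have "\<dots> \<le> sw_hat \<theta> {1..k'}" using that \<open>k \<in> {1..n}\<close> by blast
    finally show "sw_hat \<theta> S \<le> sw_hat \<theta> {1..k'}" .
  qed
  with \<open>k \<in> {1..n}\<close> \<open>?optimal k\<close> show ?thesis by blast
qed

end
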